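(* Let $m\ge1$ and let $u=u_1\cdots u_r$ and $v=v_1\cdots v_s$ be weakly increasing words with letters in $[m]=\{1,\dots,m\}$, with $r\le s$. Let $c=(\text{length of the first row of }P(uv))-s$. Then for every $k\ge1$, $$v^{(k)}_t<u^{(k)}_{t+c}\quad\text{for all } t\in[rk-c],$$ where $x_t$ denotes the $t$-th letter of a word $x$.
   Context: $P(w)$ is the Robinson–Schensted row-insertion tableau of the word $w$, and $uv$ is concatenation. For a word $x=x_1\cdots x_n$, $x+m=(x_1+m)\cdots(x_n+m)$, and $x^{(k)}=x\,(x+m)\,(x+2m)\cdots(x+(k-1)m)$ (concatenation, with the given $m$). *)

theory Defs
  imports Main
begin

fun row_insert :: "nat \<Rightarrow> nat list \<Rightarrow> nat list \<times> nat option" where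
  "row_insert x [] = ([x], None)"
| "row_insert x (y # ys) =
     (if x < y then (x # ys, Some y)
      else (let (ys', b) = row_insert x ys in (y # ys', b)))"

fun tab_insert :: "nat \<Rightarrow> nat list list \<Rightarrow> nat list list" where
  "tab_insert x [] = [[x]]"
| "tab_insert x (row # rows) =
     (case row_insert x row of
        (row', None) \<Rightarrow> row' # rows
      | (row', Some y) \<Rightarrow> row' # tab_insert y rows)"

definition P_tab :: "nat list \<Rightarrow> nat list list" where
  "P_tab w = fold tab_insert w []"

definition first_row_length :: "nat list list \<Rightarrow> nat" where
  "first_row_length T = (case T of [] \<Rightarrow> 0 | row # _ \<Rightarrow> length row)"

definition shift_word :: "nat list \<Rightarrow> nat \<Rightarrow> nat list" where
  "shift_word x j = map (\<lambda>a. a + j) x"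

definition power_word :: "nat \<Rightarrow> nat list \<Rightarrow> nat \<Rightarrow> nat list" where
  "power_word m x k = concat (map (\<lambda>i. shift_word x (i * m)) [0..<k])"

end

theory Submission
  imports Defs
begin

text \<open>The first row of \<open>P(uv)\<close> arises by row-inserting the letters of \<open>v\<close> into the row \<open>u\<close>.
Once the row has a letter \<open>\<le> u\<^sub>i\<close> in box \<open>i\<close>, each later letter \<open>\<ge> u\<^sub>i\<close> of the weakly
increasing word \<open>v\<close> lands strictly to the right of the previous one, so the first row has at
least \<open>i + #{j. v\<^sub>j \<ge> u\<^sub>i}\<close> boxes; that is, at least \<open>i - c\<close> letters of \<open>v\<close> are \<open>< u\<^sub>i\<close>.
In \<open>v\<^sup>(\<^sup>k\<^sup>)\<close> and \<open>u\<^sup>(\<^sup>k\<^sup>)\<close> the \<open>a\<close>-th blocks are shifted by \<open>a m\<close>, so the \<open>t\<close>-th letter of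
\<open>v\<^sup>(\<^sup>k\<^sup>)\<close> either lies in an earlier block than the \<open>(t + c)\<close>-th letter \<open>u\<^sub>i + a m\<close> of
\<open>u\<^sup>(\<^sup>k\<^sup>)\<close>, or in the same block among the letters of \<open>v\<close> below \<open>u\<^sub>i\<close>.\<close>

definition row_ins :: "nat \<Rightarrow> nat list \<Rightarrow> nat list" where
  "row_ins x r = fst (row_insert x r)"

lemma row_ins_Nil [simp]: "row_ins x [] = [x]"
  by (simp add: row_ins_def)

lemma row_ins_Cons:
  "row_ins x (y # ys) = (if x < y then x # ys else y # row_ins x ys)"
  by (simp add: row_ins_def split: prod.split)

lemma length_row_ins_ge: "length r \<le> length (row_ins x r)"
  by (induction r) (auto simp: row_ins_Cons)

lemma set_row_ins: "set (row_ins x r) \<subseteq> insert x (set r)"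
  by (induction r) (auto simp: row_ins_Cons)

lemma sorted_row_ins: "sorted r \<Longrightarrow> sorted (row_ins x r)"
  by (induction r) (use set_row_ins in \<open>fastforce simp: row_ins_Cons\<close>)+

lemma sorted_fold_row_ins: "sorted r \<Longrightarrow> sorted (fold row_ins w r)"
  by (induction w arbitrary: r) (auto simp: sorted_row_ins)

lemma row_ins_nth_le: "i < length r \<Longrightarrow> row_ins x r ! i \<le> r ! i"
  by (induction r arbitrary: i) (auto simp: row_ins_Cons nth_Cons')

lemma row_ins_append_max: "\<forall>y\<in>set r. y \<le> x \<Longrightarrow> row_ins x r = r @ [x]"
  by (induction r) (auto simp: row_ins_Cons)

lemma fold_row_ins_sorted: "sorted u \<Longrightarrow> fold row_ins u [] = u"
  by (induction u rule: rev_induct) (auto simp: sorted_append row_ins_append_max)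

lemma row_ins_extends:
  assumes "sorted r" "L \<le> length r" "L = 0 \<or> r ! (L - 1) \<le> x"
  shows "L < length (row_ins x r) \<and> row_ins x r ! L \<le> x"
  using assms
proof (induction r arbitrary: L)
  case Nil then show ?case by simp
next
  case (Cons y ys)
  show ?case
  proof (cases L)
    case 0 then show ?thesis by (cases ys) (auto simp: row_ins_Cons)
  next
    case (Suc L')
    have "L' = 0" if "x < y"
    proof (rule ccontr)
      assume "L' \<noteq> 0"
      then have "ys ! (L' - 1) \<in> set ys" using Cons.prems(2) Suc by simp
      then have "y \<le> ys ! (L' - 1)" using Cons.prems(1) by simp
      then show False using Cons.prems(3) Suc \<open>L' \<noteq> 0\<close> that by simp
    qed
    then show ?thesis using Cons Suc by (cases L') (auto simp: row_ins_Cons)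
  qed
qed

definition first_row :: "nat list list \<Rightarrow> nat list" where
  "first_row T = (case T of [] \<Rightarrow> [] | r # _ \<Rightarrow> r)"

lemma first_row_length_eq: "first_row_length T = length (first_row T)"
  by (cases T) (auto simp: first_row_length_def first_row_def)

lemma first_row_tab_insert: "first_row (tab_insert x T) = row_ins x (first_row T)"
  by (cases T) (auto simp: first_row_def row_ins_def split: option.splits prod.splits)

lemma first_row_P_tab: "first_row (P_tab w) = fold row_ins w []"
proof -
  have "first_row (fold tab_insert w T) = fold row_ins w (first_row T)" for T
    by (induction w arbitrary: T) (auto simp: first_row_tab_insert)
  then show ?thesis by (simp add: P_tab_def first_row_def)
qed

definition row_reaches :: "nat list \<Rightarrow> nat \<Rightarrow> nat \<Rightarrow> bool" where
  "row_reaches r L y \<longleftrightarrow> L \<le> length r \<and> (L = 0 \<or> r ! (L - 1) \<le> y)"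

lemma row_reaches_row_ins: "row_reaches r L y \<Longrightarrow> row_reaches (row_ins x r) L y"
  unfolding row_reaches_def
  using length_row_ins_ge[of r x] row_ins_nth_le[of "L - 1" r x] by fastforce

lemma row_reaches_row_ins_Suc:
  "sorted r \<Longrightarrow> row_reaches r L y \<Longrightarrow> y \<le> x \<Longrightarrow> row_reaches (row_ins x r) (Suc L) x"
  unfolding row_reaches_def using row_ins_extends[of r L x] by (auto simp: Suc_le_eq)

lemma length_fold_row_ins_ge:
  assumes "sorted w" "sorted r" "row_reaches r L y"
  shows "L + length (filter (\<lambda>x. y \<le> x) w) \<le> length (fold row_ins w r)"
  using assms
proof (induction w arbitrary: r L y)
  case Nil then show ?case by (simp add: row_reaches_def)
next
  case (Cons x w)
  have sorted: "sorted (row_ins x r)" using Cons.prems(2) by (rule sorted_row_ins)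
  show ?case
  proof (cases "y \<le> x")
    case True
    have "row_reaches (row_ins x r) (Suc L) x"
      using row_reaches_row_ins_Suc Cons.prems True by blast
    then have "Suc L + length (filter (\<lambda>z. x \<le> z) w) \<le> length (fold row_ins w (row_ins x r))"
      using Cons.IH[of "row_ins x r" "Suc L" x] Cons.prems(1) sorted by simp
    moreover have "filter (\<lambda>z. x \<le> z) w = w" "filter (\<lambda>z. y \<le> z) w = w"
      using Cons.prems(1) True by (auto simp: filter_id_conv intro: order_trans)
    ultimately show ?thesis using True by simp
  next
    case False
    then show ?thesis
      using Cons.IH Cons.prems row_reaches_row_ins sorted by simp
  qed
qed

lemma length_le_first_row_P_tab_append:
  "sorted v \<Longrightarrow> length v \<le> first_row_length (P_tab (u @ v))"
  using length_fold_row_ins_ge[of v "fold row_ins u []" 0 0]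
  by (simp add: first_row_length_eq first_row_P_tab sorted_fold_row_ins row_reaches_def)

lemma first_row_P_tab_append_ge:
  assumes "sorted u" "sorted v" "i < length u"
  shows "i + 1 + length v \<le> first_row_length (P_tab (u @ v)) + length (filter (\<lambda>x. x < u ! i) v)"
proof -
  have "row_reaches u (Suc i) (u ! i)" using assms(3) by (simp add: row_reaches_def)
  then have "Suc i + length (filter (\<lambda>x. u ! i \<le> x) v) \<le> first_row_length (P_tab (u @ v))"
    using length_fold_row_ins_ge[OF assms(2,1), of "Suc i" "u ! i"]
    by (simp add: first_row_length_eq first_row_P_tab fold_row_ins_sorted assms(1))
  moreover have "length (filter (\<lambda>x. u ! i \<le> x) v) + length (filter (\<lambda>x. x < u ! i) v) = length v"
    using sum_length_filter_compl[of "\<lambda>x. x < u ! i" v] by (simp add: not_less)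
  ultimately show ?thesis by linarith
qed

lemma power_word_Suc: "power_word m x (Suc k) = power_word m x k @ shift_word x (k * m)"
  by (simp add: power_word_def)

lemma length_power_word: "length (power_word m x k) = k * length x"
  by (induction k) (auto simp: power_word_Suc shift_word_def power_word_def)

lemma nth_power_word:
  "n < k * length x \<Longrightarrow> power_word m x k ! n = x ! (n mod length x) + n div length x * m"
proof (induction k)
  case 0 then show ?case by simp
next
  case (Suc k)
  show ?case
  proof (cases "n < k * length x")
    case True then show ?thesis
      using Suc by (simp add: power_word_Suc nth_append length_power_word)
  next
    case False
    define j where "j = n - k * length x"
    have j: "n = k * length x + j" "j < length x" using False Suc.prems unfolding j_def by auto
    then have div: "n div length x = k" by (intro div_nat_eqI) (auto simp: mult.commute)
    then have "n mod length x = j" using j by (metis minus_div_mult_eq_mod add_diff_cancel_left')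
    then show ?thesis
      using div j by (simp add: power_word_Suc nth_append length_power_word shift_word_def)
  qed
qed

lemma sorted_nth_less_of_filter:
  "sorted v \<Longrightarrow> j < length (filter (\<lambda>x. x < y) v) \<Longrightarrow> v ! j < y"
proof (induction v arbitrary: j)
  case Nil then show ?case by simp
next
  case (Cons x v)
  then show ?case
  proof (cases "x < y")
    case False
    then have "filter (\<lambda>z. z < y) (x # v) = []"
      using Cons.prems(1) by (auto simp: filter_empty_conv)
    then show ?thesis using Cons.prems by simp
  qed (cases j, auto)
qed

lemma power_word_shift_less:
  assumes "sorted v" "length u \<le> length v"
    and "\<forall>x\<in>set v. \<forall>y\<in>set u. x < y + m"
    and "\<forall>i<length u. i + 1 \<le> c + length (filter (\<lambda>x. x < u ! i) v)"
    and "c \<le> n" "n < k * length u"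
  shows "power_word m v k ! (n - c) < power_word m u k ! n"
proof -
  define r where "r = length u"
  define s where "s = length v"
  define a where "a = n div r"
  define i where "i = n mod r"
  define p where "p = n - c"
  define f where "f = length (filter (\<lambda>x. x < u ! i) v)"
  have "r > 0" using assms(6) r_def by (cases r) auto
  then have "i < r" "s > 0" "n = a * r + i" using assms(2) r_def s_def a_def i_def by auto
  have "p \<le> n" by (simp add: p_def)
  also have "n < k * r" using assms(6) r_def by simp
  also have "\<dots> \<le> k * s" using assms(2) r_def s_def by simp
  finally have "p < k * s" .
  have u_val: "power_word m u k ! n = u ! i + a * m"
    using nth_power_word[OF assms(6)] r_def a_def i_def by simp
  have v_val: "power_word m v k ! p = v ! (p mod s) + p div s * m"
    using nth_power_word[OF \<open>p < k * s\<close>[unfolded s_def]] s_def by simp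
  have "v ! (p mod s) \<in> set v" "u ! i \<in> set u" using \<open>s > 0\<close> \<open>i < r\<close> s_def r_def by auto
  then have v_lt: "v ! (p mod s) < u ! i + m" using assms(3) by blast
  have "v ! (p mod s) + p div s * m < u ! i + a * m"
  proof (cases "p < a * s")
    case True
    then have "Suc (p div s) \<le> a" by (simp add: less_mult_imp_div_less Suc_leI)
    then have "p div s * m + m \<le> a * m" using mult_le_mono1[of "Suc (p div s)" a m] by simp
    then show ?thesis using v_lt by linarith
  next
    case False
    \<comment> \<open>then position \<open>p\<close> lies in block \<open>a\<close>, among the letters of \<open>v\<close> below \<open>u ! i\<close>\<close>
    have "i + 1 \<le> c + f" using assms(4) \<open>i < r\<close> r_def f_def by simp
    moreover have "a * r \<le> a * s" using assms(2) r_def s_def by simp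
    ultimately have "p < a * s + f" using \<open>n = a * r + i\<close> p_def assms(5) by linarith
    moreover have "f \<le> s" using f_def s_def by simp
    ultimately have div: "p div s = a" using False by (intro div_nat_eqI) (auto simp: mult.commute)
    then have "p mod s = p - a * s" by (simp add: minus_div_mult_eq_mod[symmetric])
    then have "p mod s < f" using \<open>p < a * s + f\<close> False by linarith
    then show ?thesis using div sorted_nth_less_of_filter[OF assms(1)] f_def by simp
  qed
  then show ?thesis using u_val v_val p_def by simp
qed

theorem mainTheorem7:
  fixes m k :: nat and u v :: "nat list"
  assumes "m \<ge> 1"
    and "sorted u" and "sorted v"
    and "set u \<subseteq> {1..m}" and "set v \<subseteq> {1..m}"
    and "length u \<le> length v"
    and "k \<ge> 1"
  shows "let c = int (first_row_length (P_tab (u @ v))) - int (length v) in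
         \<forall>t::nat. 1 \<le> t \<and> int t \<le> int (length u * k) - c \<longrightarrow>
           power_word m v k ! (t - 1) < power_word m u k ! nat (int t + c - 1)"
proof -
  define L where "L = first_row_length (P_tab (u @ v))"
  define c where "c = L - length v"
  have "length v \<le> L" unfolding L_def using assms(3) by (rule length_le_first_row_P_tab_append)
  have bound: "\<forall>i<length u. i + 1 \<le> c + length (filter (\<lambda>x. x < u ! i) v)"
    using first_row_P_tab_append_ge[OF assms(2,3)] unfolding c_def L_def by fastforce
  have letters: "\<forall>x\<in>set v. \<forall>y\<in>set u. x < y + m" using assms(4,5) by fastforce
  show ?thesis unfolding Let_def L_def[symmetric]
  proof (intro allI impI)
    fix t :: nat assume t: "1 \<le> t \<and> int t \<le> int (length u * k) - (int L - int (length v))"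
    have c_int: "int c = int L - int (length v)" using \<open>length v \<le> L\<close> c_def by simp
    have "int (t + c) \<le> int (k * length u)" using t c_int by (simp add: mult.commute)
    then have "c \<le> t + c - 1" "t + c - 1 < k * length u"
      and index: "nat (int t + (int L - int (length v)) - 1) = t + c - 1"
      using t c_int by linarith+
    with power_word_shift_less[OF assms(3,6) letters bound, of "t + c - 1" k]
    show "power_word m v k ! (t - 1) < power_word m u k ! nat (int t + (int L - int (length v)) - 1)"
      using t by simp
  qed
qed

end
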